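(* For $n\ge2$ let $\beta_n$ and $\gamma_n$ be the minimal zeros of $U^{\mathrm{e}}_n(x)$ and $S_n(x)$ respectively. Then $\beta_2=\gamma_2=-\frac12$; $$-1<\gamma_{2n+1}<\cos\frac{(2n+1)\pi}{2n+2}<\beta_{2n+1}=\cos\frac{2n\pi}{2n+2}\quad(n\ge1);$$ $$-1<\beta_{2n}=\cos\frac{2n\pi}{2n+1}<\gamma_{2n}<\cos\frac{(2n-1)\pi}{2n+1}\quad(n\ge2).$$
   Context: $U_n(x)$ is the Chebyshev polynomial of the second kind ($U_n(\cos\theta)=\sin((n+1)\theta)/\sin\theta$), with $U_{-1}=0$. The partial Chebyshev polynomial $U^{\mathrm{e}}_n$ is the polynomial with $U^{\mathrm{e}}_n(\cos\theta)=\frac{\sin((n+1)\theta/2)}{\sin(\theta/2)}$ for even $n$ and $U^{\mathrm{e}}_n(\cos\theta)=\frac{\sin((n+1)\theta/2)}{\sin\theta}$ for odd $n$. For $n\ge0$, $S_{2n}(x)=(2nx+x+2n-1)U_n(x)-(2nx+3x+2n+1)U_{n-1}(x)$ and $S_{2n+1}(x)=2(2nx^2+2x^2+2nx-x-1)U_n(x)-2(2nx+3x+2n+1)U_{n-1}(x)$. *)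

theory Defs
  imports "HOL-Analysis.Analysis" "HOL-Computational_Algebra.Polynomial"
begin

fun chebU :: "nat \<Rightarrow> real poly" where
  "chebU 0 = 1"
| "chebU (Suc 0) = [:0, 2:]"
| "chebU (Suc (Suc n)) = [:0, 2:] * chebU (Suc n) - chebU n"

definition chebU_pred :: "nat \<Rightarrow> real poly" where
  "chebU_pred n = (if n = 0 then 0 else chebU (n - 1))"

definition chebUe :: "nat \<Rightarrow> real poly" where
  "chebUe n = (THE p. \<forall>t\<in>{0<..<pi}.
      poly p (cos t) = (if even n then sin ((real n + 1) * t / 2) / sin (t / 2)
                                  else sin ((real n + 1) * t / 2) / sin t))"

definition polyS :: "nat \<Rightarrow> real poly" where
  "polyS k = (let m = real (k div 2) in
     if even k then
       [:2*m - 1, 2*m + 1:] * chebU (k div 2) - [:2*m + 1, 2*m + 3:] * chebU_pred (k div 2)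
     else
       2 * [:-1, 2*m - 1, 2*m + 2:] * chebU (k div 2) - 2 * [:2*m + 1, 2*m + 3:] * chebU_pred (k div 2))"

definition min_zero :: "real poly \<Rightarrow> real" where
  "min_zero p = Min {x. poly p x = 0}"

end

theory Submission
  imports Defs
begin

(* Under x = cos t the polynomials become trigonometric expressions:
   U_n(cos t) sin t = sin((n+1)t),  (U_m + U_(m-1))(cos 2h) sin h = sin((2m+1)h)  and
   S_2n(cos 2h) sin 2h = -4 cos(h)^3 sin((2n+1)h) + 4((n+1) cos 2h + n) cos((2n+1)h) sin h.
   None of them vanishes for x <= -1, since U_n(y) >= 1 and U_n(y) - U_(n-1)(y) >= 1 for y >= 1.
   Hence the minimal zero of U^e_n is cos t for the largest zero t < pi of the sine on the
   right.  For S_(2n+1) a sign change on [-1, cos((2n+1)pi/(2n+2))] brackets the minimal zero.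
   For S_2n both terms above have the sign of -(-1)^n as long as 2h >= 2n pi/(2n+1), because
   (n+1) cos(2n pi/(2n+1)) + n < 0 for n >= 2, while at 2h = (2n-1)pi/(2n+1) only the first term
   survives and has the sign of (-1)^n. *)

lemma chebU_pred_0 [simp]: "chebU_pred 0 = 0"
  and chebU_pred_Suc [simp]: "chebU_pred (Suc n) = chebU n"
  by (simp_all add: chebU_pred_def)

lemma chebU_Suc: "chebU (Suc n) = [:0, 2:] * chebU n - chebU_pred n"
  by (cases n) simp_all

lemma poly_chebU_cos: "poly (chebU n) (cos t) * sin t = sin ((real n + 1) * t)"
proof (induction n rule: chebU.induct)
  case 1
  then show ?case by simp
next
  case 2
  then show ?case by (simp add: sin_double)
next
  case (3 n)
  have "poly (chebU (Suc (Suc n))) (cos t) * sin t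
      = 2 * cos t * sin ((real n + 2) * t) - sin ((real n + 1) * t)"
    using "3" by (simp add: algebra_simps)
  also have "\<dots> = sin ((real n + 3) * t)"
    using sin_times_cos[of "(real n + 2) * t" t] by (simp add: algebra_simps)
  finally show ?case
    by (simp add: add.commute add.left_commute)
qed

lemma poly_chebU_pred_cos: "poly (chebU_pred n) (cos t) * sin t = sin (real n * t)"
  by (cases n) (simp_all add: poly_chebU_cos add.commute)

lemma poly_chebU_minus: "poly (chebU n) (- x) = (-1) ^ n * poly (chebU n) x"
  by (induction n rule: chebU.induct) (auto simp: algebra_simps)

lemma poly_chebU_pred_minus: "poly (chebU_pred n) (- x) = - ((-1) ^ n * poly (chebU_pred n) x)"
  by (cases n) (simp_all add: poly_chebU_minus)

lemma poly_chebU_one: "poly (chebU n) 1 = real n + 1"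
  by (induction n rule: chebU.induct) (auto simp: algebra_simps)

lemma poly_chebU_pred_one: "poly (chebU_pred n) 1 = real n"
  by (cases n) (simp_all add: poly_chebU_one)

lemma poly_chebU_monotone_ge_one:
  assumes "1 \<le> y"
  shows "1 \<le> poly (chebU n) y \<and> 0 \<le> poly (chebU_pred n) y \<and> poly (chebU_pred n) y + 1 \<le> poly (chebU n) y"
proof (induction n)
  case 0
  then show ?case by simp
next
  case (Suc n)
  have rec: "poly (chebU (Suc n)) y = 2 * y * poly (chebU n) y - poly (chebU_pred n) y"
    by (simp add: chebU_Suc)
  have "2 * poly (chebU n) y \<le> 2 * y * poly (chebU n) y"
    using Suc assms by simp
  then show ?case
    unfolding chebU_pred_Suc rec using Suc by linarith
qed

lemma poly_chebU_add_pred_cos: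
  assumes "cos h \<noteq> 0"
  shows "poly (chebU n + chebU_pred n) (cos (2 * h)) * sin h = sin ((2 * real n + 1) * h)"
proof -
  have "cos h * (2 * (poly (chebU n + chebU_pred n) (cos (2 * h)) * sin h))
      = poly (chebU n + chebU_pred n) (cos (2 * h)) * sin (2 * h)"
    by (simp add: sin_double)
  also have "\<dots> = sin ((real n + 1) * (2 * h)) + sin (real n * (2 * h))"
    by (simp add: distrib_right poly_chebU_cos poly_chebU_pred_cos)
  also have "\<dots> = cos h * (2 * sin ((2 * real n + 1) * h))"
  proof -
    have "((real n + 1) * (2 * h) + real n * (2 * h)) / 2 = (2 * real n + 1) * h"
      and "((real n + 1) * (2 * h) - real n * (2 * h)) / 2 = h"
      by (simp_all add: field_simps)
    then show ?thesis
      by (simp add: sin_plus_sin)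
  qed
  finally show ?thesis
    using assms by simp
qed

lemma poly_eqI_cos:
  fixes p q :: "real poly"
  assumes "\<And>t. 0 < t \<Longrightarrow> t < pi \<Longrightarrow> poly p (cos t) = poly q (cos t)"
  shows "p = q"
proof (rule ccontr)
  assume "p \<noteq> q"
  then have "finite {x. poly (p - q) x = 0}"
    by (intro poly_roots_finite) simp
  moreover have "{-1<..<1} \<subseteq> {x. poly (p - q) x = 0}"
  proof
    fix x :: real
    assume x: "x \<in> {-1<..<1}"
    then have "0 < arccos x" "arccos x < pi" "cos (arccos x) = x"
      using arccos_lt_bounded[of x] by auto
    then have "poly p x = poly q x"
      using assms[of "arccos x"] by simp
    then show "x \<in> {x. poly (p - q) x = 0}"
      by simp
  qed
  ultimately have "finite {-1<..<(1::real)}"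
    by (rule finite_subset[rotated])
  then show False
    using infinite_Ioo[of "-1::real" 1] by simp
qed

lemma chebUe_eqI:
  assumes "\<And>t. 0 < t \<Longrightarrow> t < pi \<Longrightarrow> poly p (cos t) =
    (if even n then sin ((real n + 1) * t / 2) / sin (t / 2) else sin ((real n + 1) * t / 2) / sin t)"
  shows "chebUe n = p"
  unfolding chebUe_def
proof (rule the_equality)
  fix q
  assume "\<forall>t\<in>{0<..<pi}. poly q (cos t) =
    (if even n then sin ((real n + 1) * t / 2) / sin (t / 2) else sin ((real n + 1) * t / 2) / sin t)"
  then show "q = p"
    using assms by (intro poly_eqI_cos) simp
qed (use assms in simp)

lemma chebUe_odd: "chebUe (2 * m + 1) = chebU m"
proof (rule chebUe_eqI)
  fix t :: real
  assume "0 < t" "t < pi"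
  then have "sin t > 0"
    by (simp add: sin_gt_zero)
  then have P: "poly (chebU m) (cos t) = sin ((real m + 1) * t) / sin t"
    using poly_chebU_cos[of m t] by (simp add: eq_divide_eq)
  have arg: "(real (2 * m + 1) + 1) * t / 2 = (real m + 1) * t"
    by (simp add: field_simps)
  show "poly (chebU m) (cos t) = (if even (2 * m + 1)
      then sin ((real (2 * m + 1) + 1) * t / 2) / sin (t / 2)
      else sin ((real (2 * m + 1) + 1) * t / 2) / sin t)"
    unfolding arg using P by simp
qed

lemma chebUe_even: "chebUe (2 * m) = chebU m + chebU_pred m"
proof (rule chebUe_eqI)
  fix t :: real
  assume "0 < t" "t < pi"
  then have "sin (t / 2) > 0" "cos (t / 2) > 0"
    by (simp_all add: sin_gt_zero cos_gt_zero)
  then have P: "poly (chebU m + chebU_pred m) (cos t) = sin ((2 * real m + 1) * (t / 2)) / sin (t / 2)"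
    using poly_chebU_add_pred_cos[of "t / 2" m] by (simp add: eq_divide_eq)
  have arg: "(real (2 * m) + 1) * t / 2 = (2 * real m + 1) * (t / 2)"
    by simp
  show "poly (chebU m + chebU_pred m) (cos t) = (if even (2 * m)
      then sin ((real (2 * m) + 1) * t / 2) / sin (t / 2)
      else sin ((real (2 * m) + 1) * t / 2) / sin t)"
    unfolding arg using P by simp
qed

lemma poly_polyS_even:
  "poly (polyS (2 * n)) x = (2 * real n * x + x + 2 * real n - 1) * poly (chebU n) x
     - (2 * real n * x + 3 * x + 2 * real n + 1) * poly (chebU_pred n) x"
  unfolding polyS_def Let_def by (simp add: algebra_simps)

lemma poly_polyS_odd:
  "poly (polyS (2 * n + 1)) x = 2 * (2 * real n * x\<^sup>2 + 2 * x\<^sup>2 + 2 * real n * x - x - 1) * poly (chebU n) x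
     - 2 * (2 * real n * x + 3 * x + 2 * real n + 1) * poly (chebU_pred n) x"
  unfolding polyS_def Let_def by (simp add: algebra_simps power2_eq_square)

lemma chebUe_no_root_le_minus_one:
  assumes "x \<le> -1"
  shows "poly (chebUe k) x \<noteq> 0"
proof -
  define m where "m = k div 2"
  have k: "k = 2 * m \<or> k = 2 * m + 1"
    unfolding m_def by presburger
  define u where "u = poly (chebU m) (- x)"
  define v where "v = poly (chebU_pred m) (- x)"
  have uv: "1 \<le> u" "v + 1 \<le> u"
    using poly_chebU_monotone_ge_one[of "- x" m] assms unfolding u_def v_def by auto
  have "poly (chebU m) x = (-1) ^ m * u" "poly (chebU_pred m) x = - ((-1) ^ m * v)"
    using poly_chebU_minus[of m "- x"] poly_chebU_pred_minus[of m "- x"] unfolding u_def v_def by simp_all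
  then have "poly (chebUe (2 * m + 1)) x = (-1) ^ m * u"
    and "poly (chebUe (2 * m)) x = (-1) ^ m * (u - v)"
    unfolding chebUe_odd chebUe_even by (simp_all add: algebra_simps)
  then show ?thesis
    using k uv by auto
qed

lemma polyS_no_root_le_minus_one:
  assumes "x \<le> -1"
  shows "poly (polyS k) x \<noteq> 0"
proof -
  define n where "n = k div 2"
  have k: "k = 2 * n \<or> k = 2 * n + 1"
    unfolding n_def by presburger
  define u where "u = poly (chebU n) (- x)"
  define v where "v = poly (chebU_pred n) (- x)"
  have uv: "1 \<le> u" "0 \<le> v" "v + 1 \<le> u"
    using poly_chebU_monotone_ge_one[of "- x" n] assms unfolding u_def v_def by auto
  have U: "poly (chebU n) x = (-1) ^ n * u" "poly (chebU_pred n) x = - ((-1) ^ n * v)"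
    using poly_chebU_minus[of n "- x"] poly_chebU_pred_minus[of n "- x"] unfolding u_def v_def by simp_all
  have nx: "real n * x \<le> - real n"
    using mult_left_mono[OF assms, of "real n"] by simp
  show ?thesis
    using k
  proof
    assume k: "k = 2 * n"
    define A where "A = 2 * real n * x + x + 2 * real n - 1"
    define B where "B = 2 * real n * x + 3 * x + 2 * real n + 1"
    have "A < 0" "B \<le> 0"
      using nx assms unfolding A_def B_def by linarith+
    then have "A * u < 0" "B * v \<le> 0"
      using uv by (simp_all add: mult_neg_pos mult_nonpos_nonneg)
    moreover have "poly (polyS k) x = (-1) ^ n * (A * u + B * v)"
      unfolding k poly_polyS_even U A_def B_def by (simp add: algebra_simps)
    ultimately show ?thesis
      by simp
  next
    assume k: "k = 2 * n + 1"
    define A where "A = 2 * (2 * real n * x\<^sup>2 + 2 * x\<^sup>2 + 2 * real n * x - x - 1)"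
    define B where "B = 2 * (2 * real n * x + 3 * x + 2 * real n + 1)"
    have "x + 1 \<le> 0" "(2 * real n + 2) * x - 3 \<le> 0" "(real n + 1) * x + real n \<le> 0"
      using nx assms by (simp_all add: algebra_simps)
    then have "0 \<le> (x + 1) * ((2 * real n + 2) * x - 3)" "0 \<le> (x + 1) * ((real n + 1) * x + real n)"
      by (simp_all add: mult_nonpos_nonpos)
    moreover have "A = 4 + 2 * ((x + 1) * ((2 * real n + 2) * x - 3))"
      and "A + B = 4 * ((x + 1) * ((real n + 1) * x + real n))"
      unfolding A_def B_def by (simp_all add: algebra_simps power2_eq_square)
    ultimately have "4 \<le> A" "0 \<le> A + B"
      by linarith+
    then have "4 \<le> A * (u - v)" "0 \<le> (A + B) * v"
      using uv mult_mono[of 4 A 1 "u - v"] by simp_all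
    moreover have "A * u + B * v = A * (u - v) + (A + B) * v"
      by (simp add: algebra_simps)
    moreover have "poly (polyS k) x = (-1) ^ n * (A * u + B * v)"
      unfolding k poly_polyS_odd U A_def B_def by (simp add: algebra_simps)
    ultimately show ?thesis
      by auto
  qed
qed

lemma min_zero_root:
  assumes "p \<noteq> 0" "poly p b = 0"
  shows "poly p (min_zero p) = 0" "min_zero p \<le> b"
proof -
  have "finite {x. poly p x = 0}" "b \<in> {x. poly p x = 0}"
    using poly_roots_finite[OF assms(1)] assms(2) by simp_all
  then show "poly p (min_zero p) = 0" "min_zero p \<le> b"
    unfolding min_zero_def using Min_in Min_le by fastforce+
qed

lemma min_zero_eqI:
  assumes "poly p a = 0" "\<And>x. x < a \<Longrightarrow> poly p x \<noteq> 0" "p \<noteq> 0"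
  shows "min_zero p = a"
  using min_zero_root[OF assms(3,1)] assms(2) by force

lemma min_zero_gt:
  assumes "poly p b = 0" "\<And>x. x \<le> a \<Longrightarrow> poly p x \<noteq> 0"
  shows "a < min_zero p"
proof -
  have "p \<noteq> 0"
    using assms(2)[of a] by auto
  then have "poly p (min_zero p) = 0"
    using min_zero_root(1) assms(1) by blast
  then show ?thesis
    using assms(2) not_le by blast
qed

lemma min_zero_between_sign_change:
  assumes "a < b" "poly p a * poly p b < 0" "\<And>x. x \<le> a \<Longrightarrow> poly p x \<noteq> 0"
  shows "a < min_zero p" "min_zero p < b"
proof -
  obtain r where r: "r < b" "poly p r = 0"
    using poly_IVT[OF assms(1,2)] by blast
  moreover have "p \<noteq> 0"
    using assms(3)[of a] by auto
  ultimately show "min_zero p < b"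
    using min_zero_root(2)[of p r] by simp
  show "a < min_zero p"
    using min_zero_gt[OF r(2) assms(3)] .
qed

lemma cos_param_ge:
  assumes "-1 < x" "x \<le> cos a" "0 \<le> a" "a \<le> pi"
  obtains t where "a \<le> t" "t < pi" "x = cos t"
proof
  have x: "-1 \<le> x" "x \<le> 1"
    using assms(1,2) cos_le_one[of a] by linarith+
  show "a \<le> arccos x"
    using arccos_le_arccos[of x "cos a"] assms by (simp add: arccos_cos)
  show "arccos x < pi"
    using arccos_ubound[OF x] arccos_eq_pi_iff[of x] x assms(1) by fastforce
  show "x = cos (arccos x)"
    using x by simp
qed

lemma min_zero_cos_eqI:
  assumes "0 < a" "a < pi" "poly p (cos a) = 0"
    and "\<And>x. x \<le> -1 \<Longrightarrow> poly p x \<noteq> 0"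
    and "\<And>t. a < t \<Longrightarrow> t < pi \<Longrightarrow> poly p (cos t) \<noteq> 0"
  shows "min_zero p = cos a"
proof (rule min_zero_eqI)
  show "poly p x \<noteq> 0" if x: "x < cos a" for x
  proof (cases "x \<le> -1")
    case False
    then obtain t where "a \<le> t" "t < pi" "x = cos t"
      using cos_param_ge[of x a] x assms(1,2) by auto
    moreover have "t \<noteq> a"
      using x \<open>x = cos t\<close> by auto
    ultimately show ?thesis
      using assms(5) by simp
  qed (use assms(4) in simp)
  show "p \<noteq> 0"
    using assms(4)[of "-1"] by auto
qed (use assms(3) in simp)

lemma sin_minus_npi: "sin (x - real n * pi) = (-1) ^ n * sin x"
  and cos_minus_npi: "cos (x - real n * pi) = (-1) ^ n * cos x"
  by (simp_all add: sin_diff cos_diff)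

lemma sin_nonzero_between_npi:
  assumes "real n * pi < x" "x < (real n + 1) * pi"
  shows "sin x \<noteq> 0"
proof -
  have "0 < sin (x - real n * pi)"
    using assms by (intro sin_gt_zero) (simp_all add: algebra_simps)
  then show ?thesis
    by (auto simp: sin_minus_npi)
qed

lemma min_zero_chebU:
  assumes "1 \<le> n"
  shows "min_zero (chebU n) = cos (real n * pi / (real n + 1))"
proof (rule min_zero_cos_eqI)
  let ?a = "real n * pi / (real n + 1)"
  show a: "0 < ?a" "?a < pi"
    using assms by (simp_all add: field_simps)
  have "poly (chebU n) (cos ?a) * sin ?a = 0"
    using poly_chebU_cos[of n ?a] by simp
  then show "poly (chebU n) (cos ?a) = 0"
    using sin_gt_zero[OF a] by simp
  show "poly (chebU n) (cos t) \<noteq> 0" if t: "?a < t" "t < pi" for t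
  proof -
    have "real n * pi < (real n + 1) * t"
      using t(1) by (simp add: field_simps)
    moreover have "(real n + 1) * t < (real n + 1) * pi"
      using t(2) by (intro mult_strict_left_mono) simp_all
    ultimately have "sin ((real n + 1) * t) \<noteq> 0"
      by (rule sin_nonzero_between_npi)
    then show ?thesis
      using poly_chebU_cos[of n t] by auto
  qed
qed (use chebUe_no_root_le_minus_one[of _ "2 * n + 1", unfolded chebUe_odd] in simp)

lemma min_zero_chebU_add_pred:
  assumes "1 \<le> n"
  shows "min_zero (chebU n + chebU_pred n) = cos (2 * real n * pi / (2 * real n + 1))"
proof (rule min_zero_cos_eqI)
  let ?h = "real n * pi / (2 * real n + 1)"
  have h: "0 < ?h" "?h < pi / 2" "(2 * real n + 1) * ?h = real n * pi"
    using assms by (simp_all add: field_simps)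
  show a: "0 < 2 * real n * pi / (2 * real n + 1)" "2 * real n * pi / (2 * real n + 1) < pi"
    using assms by (simp_all add: field_simps)
  have "0 < sin ?h"
    using h(1,2) pi_gt_zero by (intro sin_gt_zero) linarith+
  moreover have "0 < cos ?h"
    using h(1,2) by (intro cos_gt_zero) linarith+
  ultimately have "poly (chebU n + chebU_pred n) (cos (2 * ?h)) = 0"
    using poly_chebU_add_pred_cos[of ?h n] h by simp
  then show "poly (chebU n + chebU_pred n) (cos (2 * real n * pi / (2 * real n + 1))) = 0"
    by (simp add: mult.assoc)
  show "poly (chebU n + chebU_pred n) (cos t) \<noteq> 0"
    if t: "2 * real n * pi / (2 * real n + 1) < t" "t < pi" for t
  proof -
    have "(2 * real n + 1) * (t / 2) < (2 * real n + 1) * (pi / 2)"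
      using t(2) by simp
    then have "real n * pi < (2 * real n + 1) * (t / 2)" "(2 * real n + 1) * (t / 2) < (real n + 1) * pi"
      using t(1) by (simp_all add: field_simps)
    then have "sin ((2 * real n + 1) * (t / 2)) \<noteq> 0"
      by (rule sin_nonzero_between_npi)
    moreover have "0 < cos (t / 2)"
      using t a by (intro cos_gt_zero) simp_all
    ultimately show ?thesis
      using poly_chebU_add_pred_cos[of "t / 2" n] by auto
  qed
qed (use chebUe_no_root_le_minus_one[of _ "2 * n", unfolded chebUe_even] in simp)

lemma min_zero_polyS_odd:
  "-1 < min_zero (polyS (2 * n + 1)) \<and> min_zero (polyS (2 * n + 1)) < cos ((2 * real n + 1) * pi / (2 * real n + 2))"
proof -
  define s :: real where "s = (-1) ^ n"
  define t where "t = (2 * real n + 1) * pi / (2 * real n + 2)"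
  have t: "0 < t" "t < pi"
    unfolding t_def by (simp_all add: field_simps add_pos_nonneg)
  have "cos pi < cos t"
    using t by (subst cos_mono_less_eq) simp_all
  then have R: "-1 < cos t"
    by simp
  have P1: "poly (polyS (2 * n + 1)) (-1) = 4 * s"
    unfolding poly_polyS_odd using poly_chebU_minus[of n 1] poly_chebU_pred_minus[of n 1]
    by (simp add: poly_chebU_one poly_chebU_pred_one s_def algebra_simps)
  have PR: "poly (polyS (2 * n + 1)) (cos t) * sin t = - 2 * s * (cos t + 1)\<^sup>2"
  proof -
    have "(real n + 1) * t = real n * pi + pi / 2"
      unfolding t_def by (simp add: field_simps)
    then have nt: "sin ((real n + 1) * t) = s" "cos ((real n + 1) * t) = 0"
      by (simp_all add: s_def sin_add cos_add)
    have "sin (real n * t) = sin ((real n + 1) * t - t)"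
      by (simp add: algebra_simps)
    also have "\<dots> = s * cos t"
      unfolding sin_diff nt by simp
    finally have "poly (chebU_pred n) (cos t) * sin t = s * cos t"
      by (simp add: poly_chebU_pred_cos)
    moreover have "poly (chebU n) (cos t) * sin t = s"
      using nt(1) by (simp add: poly_chebU_cos)
    moreover have "poly (polyS (2 * n + 1)) (cos t) * sin t
      = 2 * (2 * real n * (cos t)\<^sup>2 + 2 * (cos t)\<^sup>2 + 2 * real n * cos t - cos t - 1) * (poly (chebU n) (cos t) * sin t)
        - 2 * (2 * real n * cos t + 3 * cos t + 2 * real n + 1) * (poly (chebU_pred n) (cos t) * sin t)"
      unfolding poly_polyS_odd by (simp add: algebra_simps)
    ultimately show ?thesis
      by (simp add: algebra_simps power2_eq_square)
  qed
  have "s * s = 1"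
    unfolding s_def by (simp flip: power_add)
  have "poly (polyS (2 * n + 1)) (-1) * poly (polyS (2 * n + 1)) (cos t) * sin t
      = 4 * s * (- 2 * s * (cos t + 1)\<^sup>2)"
    by (simp only: mult.assoc P1 PR)
  also have "\<dots> = - 8 * (s * s) * (cos t + 1)\<^sup>2"
    by (simp add: mult_ac)
  also have "\<dots> < 0 * sin t"
    using R \<open>s * s = 1\<close> by simp
  finally have "poly (polyS (2 * n + 1)) (-1) * poly (polyS (2 * n + 1)) (cos t) < 0"
    using sin_gt_zero[OF t] by (simp only: mult_less_cancel_right_pos)
  then show ?thesis
    using min_zero_between_sign_change[OF R] polyS_no_root_le_minus_one unfolding t_def by blast
qed

lemma poly_polyS_even_cos:
  "poly (polyS (2 * n)) (cos (2 * h)) * sin (2 * h)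
    = - 4 * cos h ^ 3 * sin ((2 * real n + 1) * h)
      + 4 * ((real n + 1) * cos (2 * h) + real n) * cos ((2 * real n + 1) * h) * sin h"
proof -
  define a where "a = (2 * real n + 1) * h"
  define A where "A = 2 * real n * cos (2 * h) + cos (2 * h) + 2 * real n - 1"
  define B where "B = 2 * real n * cos (2 * h) + 3 * cos (2 * h) + 2 * real n + 1"
  have "(real n + 1) * (2 * h) = a + h" "real n * (2 * h) = a - h"
    unfolding a_def by (simp_all add: algebra_simps)
  then have U: "poly (chebU n) (cos (2 * h)) * sin (2 * h) = sin (a + h)"
    and P: "poly (chebU_pred n) (cos (2 * h)) * sin (2 * h) = sin (a - h)"
    using poly_chebU_cos[of n "2 * h"] poly_chebU_pred_cos[of n "2 * h"] by simp_all
  have "poly (polyS (2 * n)) (cos (2 * h)) * sin (2 * h)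
      = A * (poly (chebU n) (cos (2 * h)) * sin (2 * h)) - B * (poly (chebU_pred n) (cos (2 * h)) * sin (2 * h))"
    unfolding poly_polyS_even A_def B_def by (simp add: algebra_simps)
  also have "\<dots> = (A - B) * sin a * cos h + (A + B) * cos a * sin h"
    unfolding U P by (simp add: sin_add sin_diff algebra_simps)
  also have "A - B = - 4 * cos h ^ 2"
    unfolding A_def B_def cos_double_cos by (simp add: algebra_simps)
  also have "A + B = 4 * ((real n + 1) * cos (2 * h) + real n)"
    unfolding A_def B_def by (simp add: algebra_simps)
  finally show ?thesis
    unfolding a_def by (simp add: algebra_simps power3_eq_cube power2_eq_square)
qed

lemma cos_ge_one_minus_sq_half: "1 - x\<^sup>2 / 2 \<le> cos (x :: real)"
proof -
  have "\<bar>sin (x / 2)\<bar>\<^sup>2 \<le> \<bar>x / 2\<bar>\<^sup>2"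
    by (intro power_mono abs_sin_x_le_abs_x) simp
  then have "sin (x / 2) ^ 2 \<le> x\<^sup>2 / 4"
    by (simp add: power_divide)
  then show ?thesis
    using cos_double_sin[of "x / 2"] by simp
qed

lemma polyS_even_factor_neg:
  assumes "2 \<le> n"
  shows "(real n + 1) * cos (2 * real n * pi / (2 * real n + 1)) + real n < 0"
proof -
  define w where "w = pi / (2 * real n + 1)"
  have "2 * real n * pi / (2 * real n + 1) = pi - w"
    unfolding w_def by (simp add: field_simps)
  then have cos_eq: "cos (2 * real n * pi / (2 * real n + 1)) = - cos w"
    by simp
  have "pi\<^sup>2 < 4\<^sup>2"
    using pi_less_4 pi_gt_zero by (intro power_strict_mono) simp_all
  then have "(real n + 1) * pi\<^sup>2 < (real n + 1) * 16"
    by (intro mult_strict_left_mono) simp_all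
  also have "\<dots> \<le> 2 * (2 * real n + 1)\<^sup>2"
  proof -
    have "2 * real n \<le> real n * real n"
      using assms by (intro mult_right_mono) simp_all
    moreover have "2 * (2 * real n + 1)\<^sup>2 = 8 * (real n * real n) + 8 * real n + 2"
      by (simp add: power2_eq_square algebra_simps)
    moreover have "2 \<le> real n"
      using assms by simp
    moreover have "(real n + 1) * 16 = 16 * real n + 16"
      by simp
    ultimately show ?thesis
      by linarith
  qed
  finally have "(real n + 1) * w\<^sup>2 < 2"
    unfolding w_def by (simp add: power_divide field_simps)
  moreover have "(real n + 1) * (1 - w\<^sup>2 / 2) \<le> (real n + 1) * cos w"
    by (intro mult_left_mono cos_ge_one_minus_sq_half) simp
  moreover have "(real n + 1) * (1 - w\<^sup>2 / 2) = real n + 1 - (real n + 1) * w\<^sup>2 / 2"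
    by (simp add: algebra_simps)
  ultimately have "real n < (real n + 1) * cos w"
    by linarith
  then show ?thesis
    unfolding cos_eq by simp
qed

lemma polyS_even_sign:
  assumes "2 \<le> n" "real n * pi / (2 * real n + 1) \<le> h" "h < pi / 2"
  shows "(-1) ^ n * poly (polyS (2 * n)) (cos (2 * h)) < 0"
proof -
  define s :: real where "s = (-1) ^ n"
  define a where "a = (2 * real n + 1) * h"
  have "0 < real n * pi / (2 * real n + 1)"
    using assms(1) by simp
  then have h: "0 < h"
    using assms(2) by linarith
  have "real n * pi \<le> a"
    using assms(2) unfolding a_def by (simp add: field_simps)
  moreover have "a < real n * pi + pi / 2"
    using mult_strict_left_mono[OF assms(3), of "2 * real n + 1"] unfolding a_def by (simp add: algebra_simps)
  ultimately have sc: "0 \<le> s * sin a" "0 < s * cos a"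
    using sin_ge_zero[of "a - real n * pi"] cos_gt_zero_pi[of "a - real n * pi"]
    unfolding s_def sin_minus_npi cos_minus_npi by simp_all
  have K: "(real n + 1) * cos (2 * h) + real n < 0"
  proof -
    have "cos (2 * h) \<le> cos (2 * real n * pi / (2 * real n + 1))"
      using assms(2,3) by (intro cos_monotone_0_pi_le) (simp_all add: field_simps)
    then have "(real n + 1) * cos (2 * h) \<le> (real n + 1) * cos (2 * real n * pi / (2 * real n + 1))"
      by (intro mult_left_mono) simp_all
    then show ?thesis
      using polyS_even_factor_neg[OF assms(1)] by linarith
  qed
  have "0 < sin h" "0 < cos h"
    using h assms(3) by (simp_all add: sin_gt_zero cos_gt_zero)
  then have "- 4 * cos h ^ 3 * (s * sin a) \<le> 0"
    and "4 * ((real n + 1) * cos (2 * h) + real n) * (s * cos a) * sin h < 0"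
    using sc K by (simp_all add: mult_neg_pos)
  moreover have "(s * poly (polyS (2 * n)) (cos (2 * h))) * sin (2 * h)
      = - 4 * cos h ^ 3 * (s * sin a) + 4 * ((real n + 1) * cos (2 * h) + real n) * (s * cos a) * sin h"
    using arg_cong[OF poly_polyS_even_cos[of n h], of "\<lambda>z. s * z"] unfolding a_def by (simp add: algebra_simps)
  ultimately have "(s * poly (polyS (2 * n)) (cos (2 * h))) * sin (2 * h) < 0"
    by linarith
  moreover have "0 < sin (2 * h)"
    using h assms(3) by (intro sin_gt_zero) simp_all
  ultimately show ?thesis
    unfolding s_def by (simp add: mult_less_0_iff)
qed

lemma min_zero_polyS_even:
  assumes "2 \<le> n"
  shows "cos (2 * real n * pi / (2 * real n + 1)) < min_zero (polyS (2 * n))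
    \<and> min_zero (polyS (2 * n)) < cos ((2 * real n - 1) * pi / (2 * real n + 1))"
proof -
  define s :: real where "s = (-1) ^ n"
  define hL where "hL = real n * pi / (2 * real n + 1)"
  define hR where "hR = (2 * real n - 1) * pi / (2 * (2 * real n + 1))"
  have L: "2 * real n * pi / (2 * real n + 1) = 2 * hL"
    and R: "(2 * real n - 1) * pi / (2 * real n + 1) = 2 * hR"
    unfolding hL_def hR_def by (simp_all add: field_simps)
  have h: "0 < hR" "hR < hL" "hL < pi / 2"
    using assms unfolding hL_def hR_def by (simp_all add: field_simps add_pos_nonneg)
  have "cos (2 * hL) < cos (2 * hR)"
    using h by (intro cos_monotone_0_pi) simp_all
  moreover have "s * poly (polyS (2 * n)) (cos (2 * hL)) < 0"
    using polyS_even_sign[OF assms _ h(3)] unfolding s_def hL_def by simp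
  moreover have "0 < s * poly (polyS (2 * n)) (cos (2 * hR))"
  proof -
    have "(2 * real n + 1) * hR = real n * pi - pi / 2"
      unfolding hR_def by (simp add: field_simps)
    then have "sin ((2 * real n + 1) * hR) = - s" "cos ((2 * real n + 1) * hR) = 0"
      unfolding s_def by (simp_all add: sin_diff cos_diff)
    then have "(s * poly (polyS (2 * n)) (cos (2 * hR))) * sin (2 * hR) = 4 * cos hR ^ 3 * (s * s)"
      using arg_cong[OF poly_polyS_even_cos[of n hR], of "\<lambda>z. s * z"] by (simp add: algebra_simps)
    moreover have "s * s = 1" "0 < cos hR" "0 < sin (2 * hR)"
      using h unfolding s_def by (simp_all flip: power_add add: cos_gt_zero sin_gt_zero)
    ultimately have "0 * sin (2 * hR) < (s * poly (polyS (2 * n)) (cos (2 * hR))) * sin (2 * hR)"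
      by simp
    then show ?thesis
      using \<open>0 < sin (2 * hR)\<close> by (simp only: mult_less_cancel_right_pos)
  qed
  ultimately have "poly (polyS (2 * n)) (cos (2 * hL)) * poly (polyS (2 * n)) (cos (2 * hR)) < 0"
    unfolding s_def by (auto simp: mult_less_0_iff zero_less_mult_iff)
  moreover have "poly (polyS (2 * n)) x \<noteq> 0" if x: "x \<le> cos (2 * hL)" for x
  proof (cases "x \<le> -1")
    case False
    then obtain t where "2 * hL \<le> t" "t < pi" "x = cos t"
      using cos_param_ge[of x "2 * hL"] x h by auto
    then have "real n * pi / (2 * real n + 1) \<le> t / 2" "t / 2 < pi / 2"
      unfolding hL_def by (simp_all add: field_simps)
    then have "s * poly (polyS (2 * n)) (cos (2 * (t / 2))) < 0"
      unfolding s_def by (rule polyS_even_sign[OF assms])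
    then show ?thesis
      using \<open>x = cos t\<close> by auto
  qed (use polyS_no_root_le_minus_one in simp)
  ultimately show ?thesis
    using min_zero_between_sign_change[OF \<open>cos (2 * hL) < cos (2 * hR)\<close>] unfolding L R by blast
qed

lemma min_zero_polyS_2: "min_zero (polyS 2) = -1 / 2"
proof (rule min_zero_eqI)
  have S2: "poly (polyS 2) x = 3 * ((2 * x + 1) * (x - 1))" for x
    using poly_polyS_even[of 1 x] by (simp add: algebra_simps numeral_2_eq_2)
  show "poly (polyS 2) (-1 / 2) = 0" "\<And>x. x < -1 / 2 \<Longrightarrow> poly (polyS 2) x \<noteq> 0"
    unfolding S2 by simp_all
  show "polyS 2 \<noteq> 0"
    using S2[of 0] by auto
qed

theorem mainTheorem17:
  shows "min_zero (chebUe 2) = -1/2 \<and> min_zero (polyS 2) = -1/2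
   \<and> (\<forall>n::nat. n \<ge> 1 \<longrightarrow>
        -1 < min_zero (polyS (2*n+1))
      \<and> min_zero (polyS (2*n+1)) < cos ((2*real n + 1) * pi / (2*real n + 2))
      \<and> cos ((2*real n + 1) * pi / (2*real n + 2)) < min_zero (chebUe (2*n+1))
      \<and> min_zero (chebUe (2*n+1)) = cos (2*real n * pi / (2*real n + 2)))
   \<and> (\<forall>n::nat. n \<ge> 2 \<longrightarrow>
        -1 < min_zero (chebUe (2*n))
      \<and> min_zero (chebUe (2*n)) = cos (2*real n * pi / (2*real n + 1))
      \<and> cos (2*real n * pi / (2*real n + 1)) < min_zero (polyS (2*n))
      \<and> min_zero (polyS (2*n)) < cos ((2*real n - 1) * pi / (2*real n + 1)))"
proof (intro conjI allI impI)
  show "min_zero (chebUe 2) = -1/2"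
    using min_zero_chebU_add_pred[of 1] chebUe_even[of 1] cos_120 by simp
  show "min_zero (polyS 2) = -1/2"
    by (rule min_zero_polyS_2)
next
  fix n :: nat
  assume "n \<ge> 1"
  show "-1 < min_zero (polyS (2*n+1))" "min_zero (polyS (2*n+1)) < cos ((2*real n + 1) * pi / (2*real n + 2))"
    using min_zero_polyS_odd[of n] by simp_all
  have "2 * real n * pi / (2 * real n + 2) = real n * pi / (real n + 1)"
    by (simp add: field_simps)
  then show odd: "min_zero (chebUe (2*n+1)) = cos (2*real n * pi / (2*real n + 2))"
    unfolding chebUe_odd using min_zero_chebU[OF \<open>n \<ge> 1\<close>] by simp
  have "cos ((2*real n + 1) * pi / (2*real n + 2)) < cos (2*real n * pi / (2*real n + 2))"
    by (intro cos_monotone_0_pi) (simp_all add: field_simps add_pos_nonneg)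
  then show "cos ((2*real n + 1) * pi / (2*real n + 2)) < min_zero (chebUe (2*n+1))"
    unfolding odd .
next
  fix n :: nat
  assume "n \<ge> 2"
  show even: "min_zero (chebUe (2*n)) = cos (2*real n * pi / (2*real n + 1))"
    using min_zero_chebU_add_pred[of n] \<open>n \<ge> 2\<close> by (simp add: chebUe_even)
  have "cos pi < cos (2*real n * pi / (2*real n + 1))"
    by (intro cos_monotone_0_pi) (simp_all add: field_simps)
  then show "-1 < min_zero (chebUe (2*n))"
    unfolding even by simp
  show "cos (2*real n * pi / (2*real n + 1)) < min_zero (polyS (2*n))"
    "min_zero (polyS (2*n)) < cos ((2*real n - 1) * pi / (2*real n + 1))"
    using min_zero_polyS_even[OF \<open>n \<ge> 2\<close>] by simp_all
qed

end
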